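(* Let $b$ be an extendable solution of length $L$. Then its extension $E(b)$ is an extendable solution of length $L+1$.
   Context: A solution of length $L \ge 1$ is a sequence $(b(0), \dots, b(L-1))$ of integers with $0 \le b(i) < L$ such that for every $0 \le i < L$, $b(i) = |\{ j : 0 \le j < L,\ b(j) = i\}|$. A solution $b$ of length $L$ is extendable if $b(b(0)) = 1$ and $b(i) = 0$ for all $i$ with $b(0) < i < L$. For an extendable solution $b$ of length $L$, its extension $e = E(b)$ is the sequence $(e(0), \dots, e(L))$ of length $L+1$ defined by: $e(0) = b(0) + 1$; $e(b(0)) = 0$; $e(b(0)+1) = 1$; $e(L) = 0$; and $e(i) = b(i)$ for all other $i$. *)

theory Defs
  imports Main
begin

definition is_solution :: "nat list \<Rightarrow> bool" where
  "is_solution b \<longleftrightarrow> length b \<ge> 1 \<and>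
     (\<forall>i < length b. b ! i < length b) \<and>
     (\<forall>i < length b. b ! i = card {j. j < length b \<and> b ! j = i})"

definition extendable :: "nat list \<Rightarrow> bool" where
  "extendable b \<longleftrightarrow> is_solution b \<and>
     b ! (b ! 0) = 1 \<and>
     (\<forall>i. b ! 0 < i \<and> i < length b \<longrightarrow> b ! i = 0)"

text \<open>The extension, of length L+1. Clauses are applied with priority in the
  order listed in the paper (only relevant if indices coincide).\<close>
definition extension :: "nat list \<Rightarrow> nat list" where
  "extension b = map (\<lambda>i.
      if i = 0 then b ! 0 + 1
      else if i = b ! 0 then 0
      else if i = b ! 0 + 1 then 1
      else if i = length b then 0
      else b ! i) [0..<length b + 1]"

end

theory Submission
  imports Defs "HOL-Library.Multiset"
begin

text \<open>Write a = b(0) for the number of zeros of b. The entries at positions 0 and a are nonzero,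
  so 0 < a and a + 1 < L. The extension replaces the entries a, 1, 0 at positions 0, a, a + 1 by
  a + 1, 0, 1 and appends a 0; as a multiset of values it trades one a for a + 1 and 0. Hence the
  value counts change only at a (down by one), at a + 1 and at 0 (up by one), exactly as the
  entries at those positions do.\<close>

lemma card_nth_eq_count_mset:
  "card {j. j < length xs \<and> xs ! j = v} = count (mset xs) v"
  using length_filter_conv_card[of "\<lambda>x. x = v" xs]
  by (simp add: count_mset count_list_eq_length_filter eq_commute[of _ v])

lemma count_mset_nth_less_length:
  assumes "i < length xs" and "xs ! i \<noteq> i"
  shows "count (mset xs) i < length xs"
  using length_filter_less[of "xs ! i" xs "\<lambda>x. i = x"] assms
  by (simp add: count_mset count_list_eq_length_filter)

lemma is_solution_iff_count:
  "is_solution b \<longleftrightarrow> b \<noteq> [] \<and> (\<forall>i < length b. b ! i = count (mset b) i)"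
proof -
  have "b ! i < length b" if "i < length b" and "b ! i = count (mset b) i" for i
    using that count_mset_nth_less_length[of i b] by (cases "b ! i = i") auto
  then show ?thesis
    unfolding is_solution_def card_nth_eq_count_mset
    by (auto simp: Suc_le_eq)
qed

lemma add_mset_nth_mset_list_update:
  "i < length xs \<Longrightarrow> add_mset (xs ! i) (mset (xs[i := x])) = add_mset x (mset xs)"
  by (simp add: mset_update)

lemma extendable_first_pos:
  assumes "extendable b"
  shows "b ! 0 \<noteq> 0"
proof
  assume "b ! 0 = 0"
  have "b \<noteq> []"
    using assms by (simp add: extendable_def is_solution_iff_count)
  then have "0 \<in># mset b"
    using \<open>b ! 0 = 0\<close> by (metis in_multiset_in_set length_greater_0_conv nth_mem)
  moreover have "count (mset b) 0 = 0"
    using assms \<open>b ! 0 = 0\<close> \<open>b \<noteq> []\<close> by (simp add: extendable_def is_solution_iff_count)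
  ultimately show False
    by simp
qed

lemma extendable_Suc_first_less_length:
  assumes "extendable b"
  shows "Suc (b ! 0) < length b"
proof -
  define a where "a = b ! 0"
  have sol: "is_solution b" and "b ! a = 1"
    using assms by (simp_all add: extendable_def a_def)
  have "a \<noteq> 0"
    using extendable_first_pos[OF assms] by (simp add: a_def)
  have "a < length b"
    using sol unfolding is_solution_def a_def by (meson less_le_trans zero_less_one)
  have "{j. j < length b \<and> b ! j = 0} \<subseteq> {..<length b} - {0, a}"
    using \<open>a \<noteq> 0\<close> \<open>b ! a = 1\<close> by (auto simp: a_def)
  then have "card {j. j < length b \<and> b ! j = 0} \<le> card ({..<length b} - {0, a})"
    by (intro card_mono) auto
  also have "\<dots> = length b - 2"
    using \<open>a \<noteq> 0\<close> \<open>a < length b\<close> by (subst card_Diff_subset) auto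
  finally have "card {j. j < length b \<and> b ! j = 0} \<le> length b - 2" .
  moreover have "card {j. j < length b \<and> b ! j = 0} = a"
    using sol \<open>a < length b\<close> unfolding is_solution_def a_def
    by (metis less_le_trans zero_less_one)
  ultimately show ?thesis
    using \<open>a \<noteq> 0\<close> \<open>a < length b\<close> by (simp add: a_def)
qed

lemma nth_extension:
  "i < Suc (length b) \<Longrightarrow> extension b ! i =
     (if i = 0 then b ! 0 + 1
      else if i = b ! 0 then 0
      else if i = b ! 0 + 1 then 1
      else if i = length b then 0
      else b ! i)"
  by (simp add: extension_def nth_append del: upt_Suc)

lemma length_extension [simp]: "length (extension b) = Suc (length b)"
  by (simp add: extension_def)

lemma extension_eq_list_update:
  assumes "b ! 0 \<noteq> 0" and "Suc (b ! 0) < length b"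
  shows "extension b = b[0 := Suc (b ! 0), b ! 0 := 0, Suc (b ! 0) := 1] @ [0]"
  using assms by (intro nth_equalityI) (auto simp: nth_extension nth_append nth_list_update)

lemma add_mset_first_mset_extension:
  assumes "extendable b"
  shows "add_mset (b ! 0) (mset (extension b)) = mset b + {#Suc (b ! 0), 0#}"
proof -
  define a where "a = b ! 0"
  have "a \<noteq> 0" and "Suc a < length b"
    using extendable_first_pos[OF assms] extendable_Suc_first_less_length[OF assms]
    by (simp_all add: a_def)
  have "b ! a = 1" and "b ! Suc a = 0"
    using assms \<open>Suc a < length b\<close> by (simp_all add: extendable_def a_def)
  have "mset (b[0 := Suc a, a := 0, Suc a := 1]) = mset (b[0 := Suc a])"
    using mset_swap[of a "b[0 := Suc a]" "Suc a"] \<open>a \<noteq> 0\<close> \<open>Suc a < length b\<close>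
      \<open>b ! a = 1\<close> \<open>b ! Suc a = 0\<close>
    by (simp add: list_update_swap)
  moreover have "add_mset a (mset (b[0 := Suc a])) = add_mset (Suc a) (mset b)"
    using add_mset_nth_mset_list_update[of 0 b "Suc a"] \<open>Suc a < length b\<close>
    by (simp add: a_def flip: length_greater_0_conv)
  ultimately show ?thesis
    using extension_eq_list_update[OF \<open>a \<noteq> 0\<close>[unfolded a_def]] \<open>Suc a < length b\<close>
    by (simp add: a_def add_mset_commute)
qed

lemma count_mset_length_eq_0:
  "is_solution b \<Longrightarrow> count (mset b) (length b) = 0"
  by (auto simp: is_solution_def in_set_conv_nth)

lemma is_solution_extension:
  assumes "extendable b"
  shows "is_solution (extension b)"
proof -
  define a where "a = b ! 0"
  have "a \<noteq> 0" and "Suc a < length b"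
    using extendable_first_pos[OF assms] extendable_Suc_first_less_length[OF assms]
    by (simp_all add: a_def)
  have sol: "is_solution b" and "b ! a = 1" and "b ! Suc a = 0"
    using assms \<open>Suc a < length b\<close> by (simp_all add: extendable_def a_def)
  then have "b \<noteq> []" and count_b: "\<And>i. i < length b \<Longrightarrow> count (mset b) i = b ! i"
    by (simp_all add: is_solution_iff_count)
  have count_e: "count (mset (extension b)) v + (if v = a then 1 else 0)
      = count (mset b) v + (if v = Suc a then 1 else 0) + (if v = 0 then 1 else 0)" for v
    using arg_cong[OF add_mset_first_mset_extension[OF assms], of "\<lambda>M. count M v"]
    by (auto simp: a_def)
  have "extension b ! i = count (mset (extension b)) i" if i_less: "i < Suc (length b)" for i
  proof -
    consider "i = 0" | "i = a" | "i = Suc a" | "i = length b"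
      | "i \<noteq> 0" "i \<noteq> a" "i \<noteq> Suc a" "i < length b"
      using i_less by (auto simp: less_Suc_eq)
    then show ?thesis
    proof cases
      case 1
      then show ?thesis
        using count_e[of 0] count_b[of 0] \<open>a \<noteq> 0\<close> \<open>b \<noteq> []\<close>
        by (simp add: nth_extension a_def)
    next
      case 2
      then show ?thesis
        using count_e[of a] count_b[of a] \<open>a \<noteq> 0\<close> \<open>Suc a < length b\<close> \<open>b ! a = 1\<close>
        by (simp add: nth_extension a_def)
    next
      case 3
      then show ?thesis
        using count_e[of "Suc a"] count_b[of "Suc a"] \<open>Suc a < length b\<close> \<open>b ! Suc a = 0\<close>
        by (simp add: nth_extension a_def)
    next
      case 4
      then show ?thesis
        using count_e[of "length b"] count_mset_length_eq_0[OF sol] \<open>Suc a < length b\<close> \<open>b \<noteq> []\<close>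
        by (simp add: nth_extension a_def del: count_mset_0_iff)
    next
      case 5
      then show ?thesis
        using count_e[of i] count_b[of i] by (simp add: nth_extension a_def)
    qed
  qed
  then show ?thesis
    by (simp add: is_solution_iff_count flip: length_greater_0_conv)
qed

theorem mainTheorem6:
  fixes b :: "nat list"
  assumes "extendable b"
  shows "extendable (extension b) \<and> length (extension b) = length b + 1"
proof -
  have "Suc (b ! 0) < length b"
    using extendable_Suc_first_less_length[OF assms] .
  moreover have "b ! i = 0" if "Suc (b ! 0) < i" and "i < length b" for i
    using assms that by (simp add: extendable_def)
  ultimately show ?thesis
    using is_solution_extension[OF assms] extendable_first_pos[OF assms]
    by (auto simp: extendable_def nth_extension)
qed

end
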